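(* Let $S:\overline{\mathcal{D}}\to\widehat{\mathbb{C}}$ be a weak B-involution with $\mathcal{D}=\bigsqcup_{i=1}^k\Omega_i$, let $\Sigma$ be its welded surface and $\mathcal{G}$ its welding graph. Then the connected components of $\Sigma$ are in bijective correspondence with the connected components of $\mathcal{G}$.
   Context: $\Omega_1,\dots,\Omega_k$ are pairwise disjoint finitely connected proper subdomains of $\widehat{\mathbb{C}}$ with $\mathrm{int}(\overline{\Omega_i})=\Omega_i$; $X\subset\partial\mathcal{D}$ finite with $\partial^0\mathcal{D}=\partial\mathcal{D}\setminus X$ a finite union of disjoint non-singular real-analytic curves; $S$ continuous on $\overline{\mathcal{D}}$, meromorphic on $\mathcal{D}$, mapping $\partial\mathcal{D}$ to itself and $X$ to itself with $S\circ S=\mathrm{id}$ on $\partial\mathcal{D}$, orientation-reversing on $\partial^0\mathcal{D}$. Set $\partial^0\Omega_i=\partial^0\mathcal{D}\cap\overline{\Omega_i}$. The welded surface $\Sigma$ is the compactification (by filling in punctures) of the Riemann surface obtained from two copies of $\mathcal{D}\cup\partial^0\mathcal{D}$ by identifying each $x\in\partial^0\mathcal{D}$ in the first copy with $S(x)$ in the second copy (this is a finite union of compact Riemann surfaces). The copies of $\Omega_i$ in the two copies are denoted $\Omega_i^\pm$. The welding graph $\mathcal{G}$ has vertices $v_1^\pm,\dots,v_k^\pm$, and edges exactly between $v_{i_1}^-$ and $v_{i_2}^+$ whenever $S(\partial^0\Omega_{i_1})\cap\partial^0\Omega_{i_2}\ne\emptyset$. *)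

theory Defs
  imports "HOL-Complex_Analysis.Complex_Analysis"
begin

section \<open>The Riemann sphere, modelled as complex option (None = infinity)\<close>

definition rs_open :: "complex option set \<Rightarrow> bool" where
  "rs_open U \<longleftrightarrow> open {z. Some z \<in> U} \<and>
     (None \<in> U \<longrightarrow> (\<exists>R. \<forall>z. norm z > R \<longrightarrow> Some z \<in> U))"

lemma istopology_rs_open: "istopology rs_open"
  unfolding istopology_def
proof (intro conjI allI impI)
  fix S T assume S: "rs_open S" and T: "rs_open T"
  have e: "{z. Some z \<in> S \<inter> T} = {z. Some z \<in> S} \<inter> {z. Some z \<in> T}" by auto
  have o: "open {z. Some z \<in> S \<inter> T}"
    using S T unfolding rs_open_def e by (intro open_Int) auto
  show "rs_open (S \<inter> T)"
    unfolding rs_open_def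
  proof (intro conjI impI)
    show "open {z. Some z \<in> S \<inter> T}" by (fact o)
    assume "None \<in> S \<inter> T"
    then obtain R1 R2 where "\<forall>z. norm z > R1 \<longrightarrow> Some z \<in> S" "\<forall>z. norm z > R2 \<longrightarrow> Some z \<in> T"
      using S T unfolding rs_open_def by blast
    then show "\<exists>R. \<forall>z. norm z > R \<longrightarrow> Some z \<in> S \<inter> T"
      by (intro exI[of _ "max R1 R2"]) auto
  qed
next
  fix K assume K: "\<forall>S\<in>K. rs_open S"
  have e: "{z. Some z \<in> \<Union>K} = (\<Union>S\<in>K. {z. Some z \<in> S})" by auto
  have o: "open (\<Union>S\<in>K. {z. Some z \<in> S})"
    using K unfolding rs_open_def by (intro open_UN) auto
  show "rs_open (\<Union>K)"
    unfolding rs_open_def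
  proof (intro conjI impI)
    show "open {z. Some z \<in> \<Union>K}" using o e by simp
    assume "None \<in> \<Union>K"
    then obtain S where "S \<in> K" "None \<in> S" by blast
    then obtain R where "\<forall>z. norm z > R \<longrightarrow> Some z \<in> S" using K unfolding rs_open_def by blast
    then show "\<exists>R. \<forall>z. norm z > R \<longrightarrow> Some z \<in> \<Union>K" using \<open>S \<in> K\<close> by blast
  qed
qed

definition riemann_sphere :: "complex option topology" where
  "riemann_sphere = topology rs_open"

text \<open>The two standard charts: (domain, chart map, inverse chart map).\<close>

definition chart_inf :: "complex option \<Rightarrow> complex" where
  "chart_inf p = (case p of None \<Rightarrow> 0 | Some z \<Rightarrow> inverse z)"

definition chart_inf_inv :: "complex \<Rightarrow> complex option" where
  "chart_inf_inv w = (if w = 0 then None else Some (inverse w))"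

definition rs_charts ::
  "(complex option set \<times> (complex option \<Rightarrow> complex) \<times> (complex \<Rightarrow> complex option)) set" where
  "rs_charts = {(- {None}, (\<lambda>p. case p of Some z \<Rightarrow> z | None \<Rightarrow> 0), Some),
                (- {Some 0}, chart_inf, chart_inf_inv)}"

definition rs_holomorphic_on :: "(complex option \<Rightarrow> complex option) \<Rightarrow> complex option set \<Rightarrow> bool" where
  "rs_holomorphic_on f U \<longleftrightarrow> openin riemann_sphere U \<and>
     continuous_map (subtopology riemann_sphere U) riemann_sphere f \<and>
     (\<forall>(A, \<phi>, \<psi>) \<in> rs_charts. \<forall>(B, \<kappa>, \<xi>) \<in> rs_charts.
        (\<kappa> \<circ> f \<circ> \<psi>) holomorphic_on {z. \<psi> z \<in> U \<inter> A \<and> f (\<psi> z) \<in> B})"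

definition rs_meromorphic_on :: "(complex option \<Rightarrow> complex option) \<Rightarrow> complex option set \<Rightarrow> bool" where
  "rs_meromorphic_on f U \<longleftrightarrow> rs_holomorphic_on f U \<and>
     (\<forall>C \<in> connected_components_of (subtopology riemann_sphere U). \<exists>p\<in>C. f p \<noteq> None)"

definition real_analytic_on :: "(real \<Rightarrow> complex) \<Rightarrow> real set \<Rightarrow> bool" where
  "real_analytic_on g T \<longleftrightarrow> (\<forall>t\<in>T. \<exists>r>0. \<exists>c::nat \<Rightarrow> complex.
      \<forall>s. \<bar>s - t\<bar> < r \<longrightarrow> (\<lambda>n. c n * of_real (s - t) ^ n) sums g s)"

definition rs_regular_analytic_at :: "(real \<Rightarrow> complex option) \<Rightarrow> real \<Rightarrow> bool" where
  "rs_regular_analytic_at \<gamma> t \<longleftrightarrow> (\<exists>(A, \<phi>, \<psi>) \<in> rs_charts. \<exists>e>0.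
      (\<forall>s. \<bar>s - t\<bar> < e \<longrightarrow> \<gamma> s \<in> A) \<and>
      real_analytic_on (\<phi> \<circ> \<gamma>) {t - e<..<t + e} \<and>
      (\<exists>v. v \<noteq> 0 \<and> ((\<phi> \<circ> \<gamma>) has_vector_derivative v) (at t)))"

text \<open>A non-singular real-analytic curve: an embedded open analytic arc, or an analytic
  Jordan curve (periodic parametrisation, injective on a period).\<close>
definition rs_analytic_curve :: "complex option set \<Rightarrow> bool" where
  "rs_analytic_curve C \<longleftrightarrow>
    (\<exists>\<gamma> a b. a < b \<and> C = \<gamma> ` {a<..<b} \<and>
        homeomorphic_map (subtopology euclideanreal {a<..<b}) (subtopology riemann_sphere C) \<gamma> \<and>
        (\<forall>t\<in>{a<..<b}. rs_regular_analytic_at \<gamma> t)) \<or>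
    (\<exists>\<gamma> p. p > 0 \<and> (\<forall>t. \<gamma> (t + p) = \<gamma> t) \<and> inj_on \<gamma> {0..<p} \<and> C = \<gamma> ` {0..<p} \<and>
        (\<forall>t. rs_regular_analytic_at \<gamma> t))"

definition rs_left_of :: "complex option set \<Rightarrow> (real \<Rightarrow> complex option) \<Rightarrow> real \<Rightarrow> bool" where
  "rs_left_of D \<gamma> t \<longleftrightarrow> (\<exists>(A, \<phi>, \<psi>) \<in> rs_charts. \<exists>e>0. \<exists>v.
      (\<forall>s. \<bar>s - t\<bar> < e \<longrightarrow> \<gamma> s \<in> A) \<and> v \<noteq> 0 \<and>
      ((\<phi> \<circ> \<gamma>) has_vector_derivative v) (at t) \<and>
      (\<forall>d. 0 < d \<and> d < e \<longrightarrow> \<psi> (\<phi> (\<gamma> t) + \<i> * of_real d * v) \<in> D))"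

definition pos_local_param ::
  "complex option set \<Rightarrow> complex option set \<Rightarrow> (real \<Rightarrow> complex option) \<Rightarrow> real \<Rightarrow> real \<Rightarrow> bool" where
  "pos_local_param D E \<gamma> a b \<longleftrightarrow> a < b \<and> inj_on \<gamma> {a<..<b} \<and> \<gamma> ` {a<..<b} \<subseteq> E \<and>
      (\<forall>t\<in>{a<..<b}. rs_regular_analytic_at \<gamma> t \<and> rs_left_of D \<gamma> t)"

definition orientation_reversing_on ::
  "complex option set \<Rightarrow> (complex option \<Rightarrow> complex option) \<Rightarrow> complex option set \<Rightarrow> bool" where
  "orientation_reversing_on D S E \<longleftrightarrow>
    (\<forall>\<gamma>1 a1 b1 \<gamma>2 a2 b2 s t s' t'.
       pos_local_param D E \<gamma>1 a1 b1 \<and> pos_local_param D E \<gamma>2 a2 b2 \<and>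
       a1 < s \<and> s < t \<and> t < b1 \<and>
       (\<forall>u\<in>{s..t}. S (\<gamma>1 u) \<in> \<gamma>2 ` {a2<..<b2}) \<and>
       s' \<in> {a2<..<b2} \<and> t' \<in> {a2<..<b2} \<and> S (\<gamma>1 s) = \<gamma>2 s' \<and> S (\<gamma>1 t) = \<gamma>2 t'
       \<longrightarrow> t' < s')"

definition rs_boundary0 :: "(nat \<Rightarrow> complex option set) \<Rightarrow> nat \<Rightarrow> complex option set \<Rightarrow> complex option set" where
  "rs_boundary0 \<Omega> k X = riemann_sphere frontier_of (\<Union>i\<in>{1..k}. \<Omega> i) - X"

definition weak_B_involution ::
  "(nat \<Rightarrow> complex option set) \<Rightarrow> nat \<Rightarrow> complex option set \<Rightarrow> (complex option \<Rightarrow> complex option) \<Rightarrow> bool" where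
  "weak_B_involution \<Omega> k X S \<longleftrightarrow>
    (let D = (\<Union>i\<in>{1..k}. \<Omega> i); bD = riemann_sphere frontier_of D; b0D = bD - X in
     (\<forall>i\<in>{1..k}.
        openin riemann_sphere (\<Omega> i) \<and> connectedin riemann_sphere (\<Omega> i) \<and>
        \<Omega> i \<noteq> {} \<and> \<Omega> i \<noteq> UNIV \<and>
        finite (connected_components_of (subtopology riemann_sphere (- \<Omega> i))) \<and>
        riemann_sphere interior_of (riemann_sphere closure_of (\<Omega> i)) = \<Omega> i) \<and>
     (\<forall>i\<in>{1..k}. \<forall>j\<in>{1..k}. i \<noteq> j \<longrightarrow> \<Omega> i \<inter> \<Omega> j = {}) \<and>
     finite X \<and> X \<subseteq> bD \<and>
     (\<exists>\<C>. finite \<C> \<and> b0D = \<Union>\<C> \<and> (\<forall>C\<in>\<C>. rs_analytic_curve C) \<and>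
          (\<forall>C1\<in>\<C>. \<forall>C2\<in>\<C>. C1 \<noteq> C2 \<longrightarrow> C1 \<inter> C2 = {})) \<and>
     continuous_map (subtopology riemann_sphere (riemann_sphere closure_of D)) riemann_sphere S \<and>
     rs_meromorphic_on S D \<and>
     S ` bD \<subseteq> bD \<and> S ` X \<subseteq> X \<and> (\<forall>x\<in>bD. S (S x) = x) \<and>
     orientation_reversing_on D S b0D)"

text \<open>Disjoint union of two copies of D union its regular boundary; copy False is the first
  copy (Omega_i^-), copy True the second (Omega_i^+).\<close>
definition weld_pre :: "(nat \<Rightarrow> complex option set) \<Rightarrow> nat \<Rightarrow> complex option set \<Rightarrow> (bool \<times> complex option) topology" where
  "weld_pre \<Omega> k X = sum_topology (\<lambda>_. subtopology riemann_sphere ((\<Union>i\<in>{1..k}. \<Omega> i) \<union> rs_boundary0 \<Omega> k X)) UNIV"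

definition weld_rel :: "(nat \<Rightarrow> complex option set) \<Rightarrow> nat \<Rightarrow> complex option set \<Rightarrow> (complex option \<Rightarrow> complex option)
    \<Rightarrow> bool \<times> complex option \<Rightarrow> bool \<times> complex option \<Rightarrow> bool" where
  "weld_rel \<Omega> k X S u v \<longleftrightarrow> u = v \<or>
     (fst u = False \<and> fst v = True \<and> snd u \<in> rs_boundary0 \<Omega> k X \<and> snd v = S (snd u)) \<or>
     (fst v = False \<and> fst u = True \<and> snd v \<in> rs_boundary0 \<Omega> k X \<and> snd u = S (snd v))"

text \<open>Z (with the map j) is the welded surface Sigma: j is a quotient map from the disjoint union
  onto an open subspace W of Z with fibres exactly the gluing classes, Z is compact, Z - W is
  finite and every point of Z - W is a filled-in puncture (it has an open neighbourhood U meeting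
  Z - W only in that point, homeomorphic to the unit disc with the point going to 0).\<close>
definition is_welded_surface :: "(nat \<Rightarrow> complex option set) \<Rightarrow> nat \<Rightarrow> complex option set \<Rightarrow> (complex option \<Rightarrow> complex option)
    \<Rightarrow> 'z topology \<Rightarrow> (bool \<times> complex option \<Rightarrow> 'z) \<Rightarrow> bool" where
  "is_welded_surface \<Omega> k X S Z j \<longleftrightarrow>
    (let W = j ` topspace (weld_pre \<Omega> k X) in
      openin Z W \<and>
      quotient_map (weld_pre \<Omega> k X) (subtopology Z W) j \<and>
      (\<forall>u\<in>topspace (weld_pre \<Omega> k X). \<forall>v\<in>topspace (weld_pre \<Omega> k X).
          j u = j v \<longleftrightarrow> weld_rel \<Omega> k X S u v) \<and>
      compact_space Z \<and> finite (topspace Z - W) \<and>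
      (\<forall>z\<in>topspace Z - W. \<exists>U h. openin Z U \<and> z \<in> U \<and> U \<inter> (topspace Z - W) = {z} \<and>
          homeomorphic_map (subtopology Z U) (top_of_set (ball (0::complex) 1)) h \<and> h z = 0))"

text \<open>Welding graph: vertices (b, i), b = False for v_i^-, b = True for v_i^+, i in {1..k};
  an edge between v_i1^- and v_i2^+ iff S(d0 Omega_i1) meets d0 Omega_i2.\<close>
definition bdry0_piece :: "(nat \<Rightarrow> complex option set) \<Rightarrow> nat \<Rightarrow> complex option set \<Rightarrow> nat \<Rightarrow> complex option set" where
  "bdry0_piece \<Omega> k X i = rs_boundary0 \<Omega> k X \<inter> riemann_sphere closure_of (\<Omega> i)"

definition welding_edge :: "(nat \<Rightarrow> complex option set) \<Rightarrow> nat \<Rightarrow> complex option set \<Rightarrow> (complex option \<Rightarrow> complex option)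
    \<Rightarrow> (bool \<times> nat) \<Rightarrow> (bool \<times> nat) \<Rightarrow> bool" where
  "welding_edge \<Omega> k X S u v \<longleftrightarrow> snd u \<in> {1..k} \<and> snd v \<in> {1..k} \<and>
     ((fst u = False \<and> fst v = True \<and> S ` bdry0_piece \<Omega> k X (snd u) \<inter> bdry0_piece \<Omega> k X (snd v) \<noteq> {}) \<or>
      (fst v = False \<and> fst u = True \<and> S ` bdry0_piece \<Omega> k X (snd v) \<inter> bdry0_piece \<Omega> k X (snd u) \<noteq> {}))"

definition welding_vertices :: "nat \<Rightarrow> (bool \<times> nat) set" where
  "welding_vertices k = UNIV \<times> {1..k}"

definition welding_component :: "(nat \<Rightarrow> complex option set) \<Rightarrow> nat \<Rightarrow> complex option set \<Rightarrow> (complex option \<Rightarrow> complex option)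
    \<Rightarrow> bool \<times> nat \<Rightarrow> (bool \<times> nat) set" where
  "welding_component \<Omega> k X S v =
     {w \<in> welding_vertices k. (v, w) \<in> {(a, b). welding_edge \<Omega> k X S a b}\<^sup>*}"

definition welding_components :: "(nat \<Rightarrow> complex option set) \<Rightarrow> nat \<Rightarrow> complex option set \<Rightarrow> (complex option \<Rightarrow> complex option)
    \<Rightarrow> (bool \<times> nat) set set" where
  "welding_components \<Omega> k X S = welding_component \<Omega> k X S ` welding_vertices k"

end

theory Submission
  imports Defs
begin

(* In each copy, the part of D u d0D lying in the closure of Omega_i is connected, and an edge
  of the welding graph says that two such pieces in opposite copies are glued at a point; so
  vertices in one graph component give pieces in one component of the welded surface.
  Conversely, the pieces over a graph component and those over its complement are saturated,
  disjoint and closed in the disjoint union, so their images are disjoint open sets covering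
  the glued part W.  A filled-in puncture has a connected punctured disc neighbourhood inside W,
  so it cannot connect the two sides.  Every component of the surface meets W, hence contains
  some Omega_i in some copy, and the component of Omega_i^(+/-) determines exactly the graph
  component of v_i^(+/-). *)

lemma topspace_riemann_sphere [simp]: "topspace riemann_sphere = UNIV"
proof -
  have "rs_open UNIV"
    unfolding rs_open_def by auto
  then have "openin riemann_sphere UNIV"
    unfolding riemann_sphere_def using istopology_rs_open by simp
  then show ?thesis
    using openin_subset by blast
qed

lemma bij_betw_classes_of_surjection:
  assumes surj: "\<phi> ` V = C" and eq: "\<And>v w. v \<in> V \<Longrightarrow> w \<in> V \<Longrightarrow> \<phi> v = \<phi> w \<longleftrightarrow> R v = R w"
  shows "\<exists>F. bij_betw F C (R ` V) \<and> (\<forall>v\<in>V. F (\<phi> v) = R v)"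
proof (intro exI conjI ballI)
  define F where "F c = R (inv_into V \<phi> c)" for c
  show F_\<phi>: "F (\<phi> v) = R v" if "v \<in> V" for v
  proof -
    have inv: "inv_into V \<phi> (\<phi> v) \<in> V"
      using that by (simp add: inv_into_into)
    have "\<phi> (inv_into V \<phi> (\<phi> v)) = \<phi> v"
      using that by (simp add: f_inv_into_f)
    then show ?thesis
      unfolding F_def using eq[OF inv that] by simp
  qed
  have "F ` C = R ` V"
    unfolding surj[symmetric] image_image using F_\<phi> by (rule image_cong[OF refl])
  moreover have "inj_on F C"
  proof (rule inj_onI)
    fix c c' assume c: "c \<in> C" and c': "c' \<in> C" and Fc: "F c = F c'"
    obtain v v' where v: "v \<in> V" "c = \<phi> v" and v': "v' \<in> V" "c' = \<phi> v'"
      using c c' unfolding surj[symmetric] by (elim imageE)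
    then have "R v = R v'"
      using Fc F_\<phi> by simp
    then show "c = c'"
      using eq[OF v(1) v'(1)] v v' by simp
  qed
  ultimately show "bij_betw F C (R ` V)"
    unfolding bij_betw_def by (rule conjI[rotated])
qed

section \<open>Filled-in punctures\<close>

definition connected_puncture :: "'a topology \<Rightarrow> 'a set \<Rightarrow> 'a \<Rightarrow> bool" where
  "connected_puncture Z W z \<longleftrightarrow> (\<exists>U. openin Z U \<and> z \<in> U \<and> U - {z} \<subseteq> W \<and> U - {z} \<noteq> {} \<and>
      connectedin Z U \<and> connectedin Z (U - {z}))"

lemma connected_puncture_disc_chart:
  assumes U: "openin Z U" and z: "z \<in> U" and UW: "U \<inter> (topspace Z - W) = {z}"
    and h: "homeomorphic_map (subtopology Z U) (top_of_set (ball (0::complex) 1)) h" and hz: "h z = 0"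
  shows "connected_puncture Z W z"
proof -
  have UZ: "U \<subseteq> topspace Z"
    using U openin_subset by blast
  then have tsU: "topspace (subtopology Z U) = U"
    by auto
  have hU: "h ` U = ball 0 1"
    using homeomorphic_imp_surjective_map[OF h] tsU by simp
  have hU0: "h ` (U - {z}) = ball 0 1 - {0}"
    using homeomorphic_imp_injective_map[OF h] z hz hU tsU by (auto simp: inj_on_image_set_diff)
  have conn: "connectedin Z A" if "A \<subseteq> U" "connected (h ` A)" for A
  proof -
    have "h ` A \<subseteq> ball 0 1" using that(1) hU by blast
    then have "connectedin (subtopology Z U) A"
      using homeomorphic_map_connectedness_eq[OF h, of A] that tsU UZ
      by (simp add: connectedin_subtopology subset_trans)
    then show ?thesis by (simp add: connectedin_subtopology)
  qed
  have "(1/2::complex) \<in> ball 0 1 - {0}" by simp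
  then have "U - {z} \<noteq> {}"
    using hU0 by (metis empty_iff image_empty)
  moreover have "connectedin Z U"
    using conn[of U] hU by simp
  moreover have "connectedin Z (U - {z})"
    using conn[of "U - {z}"] hU0 connected_punctured_ball[of "0::complex" 1] by simp
  moreover have "U - {z} \<subseteq> W"
    using UW UZ by blast
  ultimately show ?thesis
    unfolding connected_puncture_def using U z by blast
qed

lemma connected_component_of_connected_puncture:
  assumes "connected_puncture Z W z"
  shows "\<exists>w\<in>W. connected_component_of Z z w"
proof -
  obtain U where U: "z \<in> U" "U - {z} \<subseteq> W" "U - {z} \<noteq> {}" "connectedin Z U"
    using assms unfolding connected_puncture_def by blast
  then obtain w where "w \<in> U - {z}" by blast
  then show ?thesis
    using U unfolding connected_component_of_def by blast
qed

text \<open>Attaching each puncture z to the side that contains its connected punctured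
  neighbourhood N z extends P and Q to an open partition of the whole space.\<close>
lemma connectedin_Int_open_partition:
  assumes punct: "\<And>z. z \<in> topspace Z - W \<Longrightarrow> connected_puncture Z W z"
    and P: "openin Z P" and Q: "openin Z Q" and PQ: "P \<inter> Q = {}" "P \<union> Q = W"
    and K: "connectedin Z K"
  shows "K \<inter> W \<subseteq> P \<or> K \<inter> W \<subseteq> Q"
proof -
  have nbhds: "\<forall>z\<in>topspace Z - W. \<exists>U. openin Z U \<and> z \<in> U \<and> U - {z} \<subseteq> W \<and> U - {z} \<noteq> {} \<and>
      connectedin Z U \<and> connectedin Z (U - {z})"
    using punct unfolding connected_puncture_def by simp
  obtain N where N: "\<And>z. z \<in> topspace Z - W \<Longrightarrow> openin Z (N z) \<and> z \<in> N z \<and> N z - {z} \<subseteq> W \<and>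
      N z - {z} \<noteq> {} \<and> connectedin Z (N z) \<and> connectedin Z (N z - {z})"
    using bchoice[OF nbhds] by blast
  have split: "C \<subseteq> A \<or> C \<subseteq> B"
    if "connectedin Z C" "openin Z A" "openin Z B" "A \<inter> B = {}" "C \<subseteq> A \<union> B" for A B C
  proof -
    have "separatedin Z A B"
      using that(2-4) by (simp add: separatedin_open_sets disjnt_def)
    then show ?thesis
      using connectedin_subset_separated_union that(1,5) by blast
  qed
  define extend where "extend A = A \<union> {z \<in> topspace Z - W. N z - {z} \<subseteq> A}" for A
  have extend_open: "openin Z (extend A)" if "openin Z A" for A
    unfolding openin_subopen[of Z "extend A"]
  proof
    fix x assume "x \<in> extend A"
    then consider "x \<in> A" | "x \<in> topspace Z - W" "N x - {x} \<subseteq> A"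
      unfolding extend_def by blast
    then show "\<exists>T. openin Z T \<and> x \<in> T \<and> T \<subseteq> extend A"
    proof cases
      case 1 then show ?thesis using that unfolding extend_def by blast
    next
      case 2 then show ?thesis using N[of x] unfolding extend_def by blast
    qed
  qed
  have "extend P \<inter> extend Q = {}"
  proof -
    have "\<not> (N z - {z} \<subseteq> P \<and> N z - {z} \<subseteq> Q)" if "z \<in> topspace Z - W" for z
      using N[OF that] PQ(1) by blast
    then show ?thesis
      using PQ unfolding extend_def by blast
  qed
  moreover have "K \<subseteq> extend P \<union> extend Q"
  proof
    fix x assume x: "x \<in> K"
    show "x \<in> extend P \<union> extend Q"
    proof (cases "x \<in> W")
      case True then show ?thesis using PQ unfolding extend_def by blast
    next
      case False
      then have "x \<in> topspace Z - W"
        using x connectedin_subset_topspace[OF K] by blast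
      then have "N x - {x} \<subseteq> P \<or> N x - {x} \<subseteq> Q"
        using N[of x] split[OF _ P Q PQ(1)] PQ(2) by blast
      then show ?thesis using \<open>x \<in> topspace Z - W\<close> unfolding extend_def by blast
    qed
  qed
  ultimately have "K \<subseteq> extend P \<or> K \<subseteq> extend Q"
    using split[OF K extend_open[OF P] extend_open[OF Q]] by blast
  then show ?thesis unfolding extend_def by blast
qed

section \<open>Components of the welded surface\<close>

locale welding =
  fixes \<Omega> :: "nat \<Rightarrow> complex option set" and k :: nat and X :: "complex option set"
    and S :: "complex option \<Rightarrow> complex option"
    and Z :: "'z topology" and j :: "bool \<times> complex option \<Rightarrow> 'z"
  assumes weak_B: "weak_B_involution \<Omega> k X S"
    and welded: "is_welded_surface \<Omega> k X S Z j"
begin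

abbreviation "pre \<equiv> weld_pre \<Omega> k X"
abbreviation "E \<equiv> welding_edge \<Omega> k X S"
abbreviation "V \<equiv> welding_vertices k"
abbreviation "wc \<equiv> welding_component \<Omega> k X S"

definition "D = (\<Union>i\<in>{1..k}. \<Omega> i)"
definition "B0 = rs_boundary0 \<Omega> k X"
definition "D0 = D \<union> B0"
definition "cl i = riemann_sphere closure_of (\<Omega> i)"
definition "W = j ` topspace pre"

lemma openin_Omega: "i \<in> {1..k} \<Longrightarrow> openin riemann_sphere (\<Omega> i)"
  and connectedin_Omega: "i \<in> {1..k} \<Longrightarrow> connectedin riemann_sphere (\<Omega> i)"
  and Omega_nonempty: "i \<in> {1..k} \<Longrightarrow> \<Omega> i \<noteq> {}"
  and Omega_disjoint: "i \<in> {1..k} \<Longrightarrow> i' \<in> {1..k} \<Longrightarrow> i \<noteq> i' \<Longrightarrow> \<Omega> i \<inter> \<Omega> i' = {}"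
  and S_frontier: "x \<in> riemann_sphere frontier_of D \<Longrightarrow> S x \<in> riemann_sphere frontier_of D"
  and S_X: "x \<in> X \<Longrightarrow> S x \<in> X"
  and S_S: "x \<in> riemann_sphere frontier_of D \<Longrightarrow> S (S x) = x"
proof -
  note wb = weak_B[unfolded weak_B_involution_def Let_def D_def[symmetric]]
  show "i \<in> {1..k} \<Longrightarrow> openin riemann_sphere (\<Omega> i)"
    and "i \<in> {1..k} \<Longrightarrow> connectedin riemann_sphere (\<Omega> i)"
    and "i \<in> {1..k} \<Longrightarrow> \<Omega> i \<noteq> {}"
    using wb[THEN conjunct1] by blast+
  show "i \<in> {1..k} \<Longrightarrow> i' \<in> {1..k} \<Longrightarrow> i \<noteq> i' \<Longrightarrow> \<Omega> i \<inter> \<Omega> i' = {}"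
    using wb[THEN conjunct2, THEN conjunct1] by blast
  have "S ` (riemann_sphere frontier_of D) \<subseteq> riemann_sphere frontier_of D \<and> S ` X \<subseteq> X \<and>
      (\<forall>x\<in>riemann_sphere frontier_of D. S (S x) = x)"
    using wb by (elim conjE) (intro conjI)
  then show "x \<in> riemann_sphere frontier_of D \<Longrightarrow> S x \<in> riemann_sphere frontier_of D"
    and "x \<in> X \<Longrightarrow> S x \<in> X"
    and "x \<in> riemann_sphere frontier_of D \<Longrightarrow> S (S x) = x"
    by blast+
qed

lemma B0_eq: "B0 = riemann_sphere frontier_of D - X"
  unfolding B0_def rs_boundary0_def D_def by (rule refl)

lemma S_S_B0: "x \<in> B0 \<Longrightarrow> S (S x) = x"
  unfolding B0_eq using S_S by blast

lemma S_B0: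
  assumes x: "x \<in> B0"
  shows "S x \<in> B0"
proof -
  have "S x \<notin> X"
    using x S_X S_S_B0[OF x] unfolding B0_eq by force
  then show ?thesis
    using x S_frontier unfolding B0_eq by blast
qed

lemma B0_subset_cl: "x \<in> B0 \<Longrightarrow> \<exists>i\<in>{1..k}. x \<in> cl i"
proof -
  have "riemann_sphere closure_of D = (\<Union>i\<in>{1..k}. cl i)"
    unfolding D_def cl_def using closure_of_Union[of "\<Omega> ` {1..k}" riemann_sphere] by simp
  then show "x \<in> B0 \<Longrightarrow> \<exists>i\<in>{1..k}. x \<in> cl i"
    unfolding B0_eq frontier_of_def by blast
qed

lemma Omega_subset_cl: "\<Omega> i \<subseteq> cl i"
  unfolding cl_def by (simp add: closure_of_subset)

lemma Omega_subset_D0: "i \<in> {1..k} \<Longrightarrow> \<Omega> i \<subseteq> D0"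
  unfolding D0_def D_def by blast

lemma D0_subset_cl: "x \<in> D0 \<Longrightarrow> \<exists>i\<in>{1..k}. x \<in> cl i"
  using B0_subset_cl Omega_subset_cl unfolding D0_def D_def by blast

lemma Omega_Int_cl_eq:
  "i \<in> {1..k} \<Longrightarrow> i' \<in> {1..k} \<Longrightarrow> p \<in> \<Omega> i \<Longrightarrow> p \<in> cl i' \<Longrightarrow> i = i'"
  using openin_Int_closure_of_eq_empty[OF openin_Omega, of i "\<Omega> i'"] Omega_disjoint
  unfolding cl_def by blast

lemma pre_eq: "pre = sum_topology (\<lambda>_. subtopology riemann_sphere D0) UNIV"
  unfolding weld_pre_def D0_def D_def B0_def by (rule refl)

lemma topspace_pre: "topspace pre = UNIV \<times> D0"
  unfolding pre_eq by auto

lemma openin_W: "openin Z W"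
  and quotient_map_j: "quotient_map pre (subtopology Z W) j"
  and j_eq_iff: "u \<in> topspace pre \<Longrightarrow> v \<in> topspace pre \<Longrightarrow> j u = j v \<longleftrightarrow> weld_rel \<Omega> k X S u v"
  and disc_charts: "\<forall>z\<in>topspace Z - W. \<exists>U h. openin Z U \<and> z \<in> U \<and> U \<inter> (topspace Z - W) = {z} \<and>
          homeomorphic_map (subtopology Z U) (top_of_set (ball (0::complex) 1)) h \<and> h z = 0"
  using welded unfolding is_welded_surface_def Let_def W_def by blast+

lemma connected_puncture_W:
  assumes "z \<in> topspace Z - W"
  shows "connected_puncture Z W z"
proof -
  obtain U h where "openin Z U" "z \<in> U" "U \<inter> (topspace Z - W) = {z}"
    "homeomorphic_map (subtopology Z U) (top_of_set (ball (0::complex) 1)) h" "h z = 0"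
    using disc_charts assms by blast
  then show ?thesis
    by (rule connected_puncture_disc_chart)
qed

lemma continuous_map_j: "continuous_map pre Z j"
  using quotient_imp_continuous_map[OF quotient_map_j] continuous_map_into_fulltopology by blast

lemma W_subset: "W \<subseteq> topspace Z"
  using openin_W openin_subset by blast

lemma j_glue:
  assumes x: "x \<in> B0"
  shows "j (False, x) = j (True, S x)"
proof -
  have "(False, x) \<in> topspace pre" "(True, S x) \<in> topspace pre"
    using x S_B0[OF x] unfolding topspace_pre D0_def by auto
  moreover have "weld_rel \<Omega> k X S (False, x) (True, S x)"
    using x unfolding weld_rel_def B0_def by simp
  ultimately show ?thesis
    using j_eq_iff by simp
qed

lemma bdry0_piece_eq: "bdry0_piece \<Omega> k X i = B0 \<inter> cl i"
  unfolding bdry0_piece_def B0_def cl_def by (rule refl)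

lemma welding_edge_sym: "E u v \<Longrightarrow> E v u"
  unfolding welding_edge_def by blast

lemma welding_edge_vertices: "E u v \<Longrightarrow> u \<in> V \<and> v \<in> V"
  unfolding welding_edge_def welding_vertices_def by (cases u; cases v) auto

lemma welding_edge_glued:
  assumes i: "i \<in> {1..k}" and m: "m \<in> {1..k}" and x: "x \<in> B0" "x \<in> cl i" and Sx: "S x \<in> cl m"
  shows "E (b, i) (\<not> b, m)"
proof -
  have "S x \<in> S ` bdry0_piece \<Omega> k X i \<inter> bdry0_piece \<Omega> k X m"
    using x Sx S_B0[OF x(1)] unfolding bdry0_piece_eq by blast
  moreover have "x \<in> S ` bdry0_piece \<Omega> k X m \<inter> bdry0_piece \<Omega> k X i"
    using x Sx S_B0[OF x(1)] S_S_B0[OF x(1)] unfolding bdry0_piece_eq by (metis IntI image_eqI)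
  ultimately show ?thesis
    unfolding welding_edge_def using i m by (cases b) auto
qed

lemma welding_component_self: "u \<in> V \<Longrightarrow> u \<in> wc u"
  unfolding welding_component_def by blast

lemma welding_path_sym: "(u, v) \<in> {(a, b). E a b}\<^sup>* \<Longrightarrow> (v, u) \<in> {(a, b). E a b}\<^sup>*"
proof -
  have "{(a, b). E a b}\<inverse> = {(a, b). E a b}"
    using welding_edge_sym by auto
  then show "(u, v) \<in> {(a, b). E a b}\<^sup>* \<Longrightarrow> (v, u) \<in> {(a, b). E a b}\<^sup>*"
    using rtrancl_converseI[of u v "{(a, b). E a b}"] by simp
qed

lemma welding_component_eq: "v \<in> wc u \<Longrightarrow> wc v = wc u"
  unfolding welding_component_def using welding_path_sym rtrancl_trans by fast

definition edge_closed :: "(bool \<times> nat) set \<Rightarrow> bool" where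
  "edge_closed C \<longleftrightarrow> C \<subseteq> V \<and> (\<forall>u v. u \<in> C \<longrightarrow> E u v \<longrightarrow> v \<in> C)"

lemma edge_closed_Diff: "edge_closed C \<Longrightarrow> edge_closed (V - C)"
  unfolding edge_closed_def using welding_edge_sym welding_edge_vertices by blast

lemma edge_closed_welding_component: "edge_closed (wc u)"
  unfolding edge_closed_def welding_component_def
  using welding_edge_vertices rtrancl_into_rtrancl[where r = "{(a, b). E a b}"] by blast

definition pieces :: "(bool \<times> nat) set \<Rightarrow> (bool \<times> complex option) set" where
  "pieces C = {(b, p). p \<in> D0 \<and> (\<exists>i\<in>{1..k}. (b, i) \<in> C \<and> p \<in> cl i)}"

lemma pieces_subset: "pieces C \<subseteq> topspace pre"
  unfolding pieces_def topspace_pre by auto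

lemma closedin_pieces: "closedin pre (pieces C)"
  unfolding pre_eq closedin_sum_topology
proof (intro conjI ballI)
  show "pieces C \<subseteq> Sigma UNIV (topspace \<circ> (\<lambda>_. subtopology riemann_sphere D0))"
    unfolding pieces_def by auto
  fix b :: bool
  have "closedin riemann_sphere (\<Union>(cl ` {i\<in>{1..k}. (b, i) \<in> C}))"
    by (rule closedin_Union) (auto simp: cl_def)
  moreover have "{p. (b, p) \<in> pieces C} = \<Union>(cl ` {i\<in>{1..k}. (b, i) \<in> C}) \<inter> D0"
    unfolding pieces_def by auto
  ultimately show "closedin (subtopology riemann_sphere D0) {p. (b, p) \<in> pieces C}"
    unfolding closedin_subtopology by blast
qed

lemma pieces_cover: "topspace pre \<subseteq> pieces C \<union> pieces (V - C)"
proof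
  fix u assume "u \<in> topspace pre"
  then obtain b p where u: "u = (b, p)" "p \<in> D0"
    unfolding topspace_pre by auto
  then obtain i where "i \<in> {1..k}" "p \<in> cl i"
    using D0_subset_cl by blast
  then show "u \<in> pieces C \<union> pieces (V - C)"
    using u unfolding pieces_def welding_vertices_def by blast
qed

text \<open>A boundary point lying on two closures in one copy is glued to a point of some closure
  in the other copy, so the two corresponding vertices have a common neighbour.\<close>
lemma pieces_disjoint:
  assumes C: "edge_closed C"
  shows "pieces C \<inter> pieces (V - C) = {}"
proof -
  have False if bp: "(b, p) \<in> pieces C" "(b, p) \<in> pieces (V - C)" for b p
  proof -
    obtain i i' where ii': "i \<in> {1..k}" "(b, i) \<in> C" "p \<in> cl i"
      "i' \<in> {1..k}" "(b, i') \<in> V - C" "p \<in> cl i'" and p: "p \<in> D0"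
      using bp unfolding pieces_def by blast
    show False
    proof (cases "p \<in> D")
      case True
      then obtain m where m: "m \<in> {1..k}" "p \<in> \<Omega> m"
        unfolding D_def by blast
      have "m = i" "m = i'"
        using Omega_Int_cl_eq[OF m(1) ii'(1) m(2) ii'(3)] Omega_Int_cl_eq[OF m(1) ii'(4) m(2) ii'(6)] by auto
      then show False
        using ii'(2,5) by blast
    next
      case False
      then have pB: "p \<in> B0"
        using p unfolding D0_def by blast
      then obtain m where m: "m \<in> {1..k}" "S p \<in> cl m"
        using S_B0 B0_subset_cl by blast
      have "E (b, i) (\<not> b, m)" "E (\<not> b, m) (b, i')"
        using welding_edge_glued[OF ii'(1) m(1) pB ii'(3) m(2)]
          welding_edge_sym[OF welding_edge_glued[OF ii'(4) m(1) pB ii'(6) m(2)]] by auto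
      then have "(b, i') \<in> C"
        using C ii'(2) unfolding edge_closed_def by blast
      then show False
        using ii'(5) by blast
    qed
  qed
  then show ?thesis by auto
qed

lemma openin_pieces:
  assumes "edge_closed C"
  shows "openin pre (pieces C)"
proof -
  have "pieces C = topspace pre - pieces (V - C)"
    using pieces_cover[of C] pieces_disjoint[OF assms] pieces_subset[of C] by blast
  then show ?thesis
    using closedin_pieces[of "V - C"] by (simp add: openin_diff)
qed

lemma pieces_saturated:
  assumes C: "edge_closed C" and u: "u \<in> topspace pre" and ju: "j u \<in> j ` pieces C"
  shows "u \<in> pieces C"
proof -
  obtain a where a: "a \<in> pieces C" "j a = j u"
    using ju by auto
  moreover have "a \<in> topspace pre"
    using a(1) pieces_subset by blast
  ultimately have "weld_rel \<Omega> k X S a u"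
    using j_eq_iff[OF _ u] by blast
  then consider "a = u"
    | x where "a = (False, x)" "u = (True, S x)" "x \<in> B0"
    | x where "u = (False, x)" "a = (True, S x)" "x \<in> B0"
    unfolding weld_rel_def B0_def by (cases a; cases u) auto
  then show ?thesis
  proof cases
    case 1
    then show ?thesis using a by simp
  next
    case (2 x)
    obtain i where i: "i \<in> {1..k}" "(False, i) \<in> C" "x \<in> cl i"
      using a(1) 2 unfolding pieces_def by blast
    obtain m where m: "m \<in> {1..k}" "S x \<in> cl m"
      using S_B0[OF 2(3)] B0_subset_cl by blast
    have "(True, m) \<in> C"
      using welding_edge_glued[OF i(1) m(1) 2(3) i(3) m(2), of False] C i(2)
      unfolding edge_closed_def by auto
    then show ?thesis
      using m S_B0[OF 2(3)] 2(2) unfolding pieces_def D0_def by blast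
  next
    case (3 x)
    obtain i where i: "i \<in> {1..k}" "(True, i) \<in> C" "S x \<in> cl i"
      using a(1) 3 unfolding pieces_def by blast
    obtain m where m: "m \<in> {1..k}" "x \<in> cl m"
      using B0_subset_cl[OF 3(3)] by blast
    have "E (True, i) (False, m)"
      using welding_edge_glued[OF i(1) m(1) S_B0[OF 3(3)] i(3), of True] m(2) S_S_B0[OF 3(3)]
      by simp
    then have "(False, m) \<in> C"
      using C i(2) unfolding edge_closed_def by blast
    then show ?thesis
      using m 3(1,3) unfolding pieces_def D0_def by blast
  qed
qed

lemma openin_image_pieces:
  assumes C: "edge_closed C"
  shows "openin Z (j ` pieces C)"
proof -
  have "{u \<in> topspace pre. j u \<in> j ` pieces C} = pieces C"
    using pieces_saturated[OF C] pieces_subset by blast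
  moreover have "j ` pieces C \<subseteq> topspace (subtopology Z W)"
    using pieces_subset W_subset unfolding W_def by auto
  ultimately have "openin (subtopology Z W) (j ` pieces C)"
    using quotient_map_j[unfolded quotient_map_def, THEN conjunct2, rule_format, of "j ` pieces C"]
      openin_pieces[OF C] by simp
  then show ?thesis
    using openin_trans_full openin_W by blast
qed

lemma connectedin_piece:
  assumes i: "i \<in> {1..k}" and y: "y \<in> D0" "y \<in> cl i"
  shows "connectedin Z (j ` Pair b ` insert y (\<Omega> i))"
proof -
  have "connectedin riemann_sphere (insert y (\<Omega> i))"
    using connectedin_intermediate_closure_of[OF connectedin_Omega[OF i], of "insert y (\<Omega> i)"]
      y(2) Omega_subset_cl[of i] unfolding cl_def by blast
  then have "connectedin (subtopology riemann_sphere D0) (insert y (\<Omega> i))"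
    using Omega_subset_D0[OF i] y(1) by (simp add: connectedin_subtopology)
  moreover have "continuous_map (subtopology riemann_sphere D0) pre (Pair b)"
    unfolding pre_eq using continuous_map_component_injection[of b UNIV] by simp
  ultimately show ?thesis
    by (intro connectedin_continuous_map_image[OF continuous_map_j]
        connectedin_continuous_map_image[of _ pre "Pair b"])
qed

definition vertex_point :: "bool \<times> nat \<Rightarrow> complex option" where
  "vertex_point v = (SOME p. p \<in> \<Omega> (snd v))"

definition vertex_component :: "bool \<times> nat \<Rightarrow> 'z set" where
  "vertex_component v = connected_component_of_set Z (j (fst v, vertex_point v))"

lemma vertex_point_in_Omega: "i \<in> {1..k} \<Longrightarrow> vertex_point (b, i) \<in> \<Omega> i"
  unfolding vertex_point_def using Omega_nonempty by (simp add: some_in_eq)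

lemma vertex_point_in_topspace: "v \<in> V \<Longrightarrow> (fst v, vertex_point v) \<in> topspace pre"
  unfolding welding_vertices_def topspace_pre
  using vertex_point_in_Omega Omega_subset_D0 by (cases v) auto

lemma vertex_point_in_vertex_component:
  assumes "v \<in> V"
  shows "j (fst v, vertex_point v) \<in> vertex_component v \<inter> W"
proof -
  have "(fst v, vertex_point v) \<in> topspace pre"
    using vertex_point_in_topspace[OF assms] .
  moreover from this have "j (fst v, vertex_point v) \<in> topspace Z"
    using continuous_map_image_subset_topspace[OF continuous_map_j] by blast
  ultimately show ?thesis
    unfolding vertex_component_def W_def by (simp add: connected_component_of_refl)
qed

lemma vertex_component_eq:
  assumes i: "i \<in> {1..k}" and y: "y \<in> D0" "y \<in> cl i"
  shows "connected_component_of_set Z (j (b, y)) = vertex_component (b, i)"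
proof -
  have "j (b, y) \<in> j ` Pair b ` insert y (\<Omega> i)"
    and "j (b, vertex_point (b, i)) \<in> j ` Pair b ` insert y (\<Omega> i)"
    using vertex_point_in_Omega[OF i] by auto
  then have "connected_component_of Z (j (b, y)) (j (b, vertex_point (b, i)))"
    using connectedin_piece[OF i y] unfolding connected_component_of_def by blast
  then show ?thesis
    unfolding vertex_component_def by (simp add: connected_component_of_equiv)
qed

lemma vertex_component_glued:
  assumes i: "i \<in> {1..k}" and m: "m \<in> {1..k}" and x: "x \<in> B0" "x \<in> cl i" and Sx: "S x \<in> cl m"
  shows "vertex_component (False, i) = vertex_component (True, m)"
proof -
  let ?p = "vertex_point (False, i)" and ?q = "vertex_point (True, m)"
  have "connectedin Z (j ` Pair False ` insert x (\<Omega> i))"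
    using connectedin_piece[OF i] x unfolding D0_def by blast
  moreover have "connectedin Z (j ` Pair True ` insert (S x) (\<Omega> m))"
    using connectedin_piece[OF m] S_B0[OF x(1)] Sx unfolding D0_def by blast
  moreover have "j (False, x) = j (True, S x)"
    using j_glue[OF x(1)] .
  ultimately have "connectedin Z (j ` Pair False ` insert x (\<Omega> i) \<union> j ` Pair True ` insert (S x) (\<Omega> m))"
    by (intro connectedin_Un) auto
  then have "connected_component_of Z (j (False, ?p)) (j (True, ?q))"
    unfolding connected_component_of_def
    using vertex_point_in_Omega[OF i] vertex_point_in_Omega[OF m] by blast
  then show ?thesis
    unfolding vertex_component_def by (simp add: connected_component_of_equiv)
qed

lemma vertex_component_edge:
  assumes "E u v"
  shows "vertex_component u = vertex_component v"
proof -
  obtain b i b' m where uv: "u = (b, i)" "v = (b', m)"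
    by fastforce
  have i: "i \<in> {1..k}" and m: "m \<in> {1..k}"
    using assms uv unfolding welding_edge_def by auto
  consider x where "b = False" "b' = True" "x \<in> B0" "x \<in> cl i" "S x \<in> cl m"
    | x where "b = True" "b' = False" "x \<in> B0" "x \<in> cl m" "S x \<in> cl i"
    using assms uv unfolding welding_edge_def bdry0_piece_eq by auto
  then show ?thesis
  proof cases
    case 1
    then show ?thesis using vertex_component_glued[OF i m] uv by simp
  next
    case 2
    then show ?thesis using vertex_component_glued[OF m i] uv by simp
  qed
qed

lemma vertex_component_path:
  "(u, v) \<in> {(a, b). E a b}\<^sup>* \<Longrightarrow> vertex_component u = vertex_component v"
  by (induction rule: rtrancl_induct) (auto dest: vertex_component_edge)

lemma welding_component_if_vertex_component_eq:
  assumes u: "u \<in> V" and v: "v \<in> V" and uv: "vertex_component u = vertex_component v"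
  shows "v \<in> wc u"
proof -
  define C where "C = wc u"
  have C: "edge_closed C" "edge_closed (V - C)"
    unfolding C_def using edge_closed_welding_component edge_closed_Diff by blast+
  let ?P = "j ` pieces C" and ?Q = "j ` pieces (V - C)"
  have PQ: "?P \<inter> ?Q = {}"
  proof (rule equals0I)
    fix z assume z: "z \<in> ?P \<inter> ?Q"
    then obtain a where a: "a \<in> pieces (V - C)" "z = j a"
      by blast
    then have "a \<in> pieces C"
      using pieces_saturated[OF C(1) subsetD[OF pieces_subset a(1)]] z by blast
    then show False
      using a(1) pieces_disjoint[OF C(1)] by blast
  qed
  have "?P \<union> ?Q = W"
    using pieces_cover[of C] pieces_subset[of C] pieces_subset[of "V - C"] unfolding W_def by blast
  then have split: "vertex_component u \<inter> W \<subseteq> ?P \<or> vertex_component u \<inter> W \<subseteq> ?Q"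
    using connectedin_Int_open_partition[OF connected_puncture_W openin_image_pieces[OF C(1)]
        openin_image_pieces[OF C(2)] PQ]
    unfolding vertex_component_def by (simp add: connectedin_connected_component_of)
  have piece_iff: "(fst w, vertex_point w) \<in> pieces C \<longleftrightarrow> w \<in> C" if wV: "w \<in> V" for w
  proof -
    obtain b i where w: "w = (b, i)" "i \<in> {1..k}"
      using wV unfolding welding_vertices_def by fastforce
    then have p: "vertex_point w \<in> \<Omega> i" "vertex_point w \<in> D0"
      using vertex_point_in_Omega Omega_subset_D0 by auto
    show ?thesis
    proof
      show "(fst w, vertex_point w) \<in> pieces C \<Longrightarrow> w \<in> C"
        using w p Omega_Int_cl_eq unfolding pieces_def by fastforce
      show "w \<in> C \<Longrightarrow> (fst w, vertex_point w) \<in> pieces C"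
        using w p Omega_subset_cl unfolding pieces_def by fastforce
    qed
  qed
  have "u \<in> C"
    unfolding C_def using welding_component_self[OF u] .
  then have "j (fst u, vertex_point u) \<in> ?P"
    using piece_iff[OF u] by blast
  then have "vertex_component u \<inter> W \<subseteq> ?P"
    using split vertex_point_in_vertex_component[OF u] PQ by blast
  then have "j (fst v, vertex_point v) \<in> ?P"
    using vertex_point_in_vertex_component[OF v] uv by blast
  then have "(fst v, vertex_point v) \<in> pieces C"
    using pieces_saturated[OF C(1) vertex_point_in_topspace[OF v]] by blast
  then show ?thesis
    using piece_iff[OF v] unfolding C_def by blast
qed

lemma vertex_component_eq_iff:
  assumes "u \<in> V" "v \<in> V"
  shows "vertex_component u = vertex_component v \<longleftrightarrow> wc u = wc v"
proof
  assume "vertex_component u = vertex_component v"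
  then show "wc u = wc v"
    using welding_component_if_vertex_component_eq[OF assms] welding_component_eq by metis
next
  assume "wc u = wc v"
  then have "(u, v) \<in> {(a, b). E a b}\<^sup>*"
    using welding_component_self[OF assms(2)] unfolding welding_component_def by blast
  then show "vertex_component u = vertex_component v"
    by (rule vertex_component_path)
qed

lemma connected_component_of_W:
  assumes z: "z \<in> topspace Z"
  shows "\<exists>w\<in>W. connected_component_of Z z w"
proof (cases "z \<in> W")
  case True
  moreover have "connected_component_of Z z z"
    using z by (simp add: connected_component_of_refl)
  ultimately show ?thesis
    by blast
next
  case False
  with z have "connected_puncture Z W z"
    by (simp add: connected_puncture_W)
  then show ?thesis
    by (rule connected_component_of_connected_puncture)
qed

lemma vertex_component_image: "vertex_component ` V = connected_components_of Z"
proof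
  show "vertex_component ` V \<subseteq> connected_components_of Z"
  proof
    fix K assume "K \<in> vertex_component ` V"
    then obtain v where v: "v \<in> V" "K = vertex_component v"
      by blast
    have "j (fst v, vertex_point v) \<in> topspace Z"
      using vertex_point_in_vertex_component[OF v(1)] W_subset by blast
    then show "K \<in> connected_components_of Z"
      unfolding connected_components_of_def v(2) vertex_component_def by (rule imageI)
  qed
  show "connected_components_of Z \<subseteq> vertex_component ` V"
  proof
    fix K assume "K \<in> connected_components_of Z"
    then obtain z where z: "z \<in> topspace Z" "K = connected_component_of_set Z z"
      unfolding connected_components_of_def by blast
    obtain w where w: "w \<in> W" "connected_component_of Z z w"
      using connected_component_of_W[OF z(1)] by blast
    then obtain b y where y: "w = j (b, y)" "y \<in> D0"
      unfolding W_def topspace_pre by auto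
    then obtain i where i: "i \<in> {1..k}" "y \<in> cl i"
      using D0_subset_cl by blast
    have "connected_component_of_set Z z = connected_component_of_set Z (j (b, y))"
      using w(2) y(1) by (simp add: connected_component_of_equiv)
    then have "K = vertex_component (b, i)"
      using vertex_component_eq[OF i(1) y(2) i(2)] z(2) by simp
    then show "K \<in> vertex_component ` V"
      using i(1) unfolding welding_vertices_def by auto
  qed
qed

end

theorem lemma4p12:
  fixes \<Omega> :: "nat \<Rightarrow> complex option set" and k :: nat and X :: "complex option set"
    and S :: "complex option \<Rightarrow> complex option"
    and Z :: "'z topology" and j :: "bool \<times> complex option \<Rightarrow> 'z"
  assumes "weak_B_involution \<Omega> k X S"
    and "is_welded_surface \<Omega> k X S Z j"
  shows "\<exists>F. bij_betw F (connected_components_of Z) (welding_components \<Omega> k X S) \<and>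
           (\<forall>b i p. i \<in> {1..k} \<longrightarrow> p \<in> \<Omega> i \<longrightarrow>
              F (connected_component_of_set Z (j (b, p))) = welding_component \<Omega> k X S (b, i))"
proof -
  interpret welding \<Omega> k X S Z j
    using assms by unfold_locales
  obtain F where F: "bij_betw F (connected_components_of Z) (wc ` V)"
    and F_vertex: "\<forall>v\<in>V. F (vertex_component v) = wc v"
    using bij_betw_classes_of_surjection[OF vertex_component_image vertex_component_eq_iff] by blast
  have "F (connected_component_of_set Z (j (b, p))) = wc (b, i)" if "i \<in> {1..k}" "p \<in> \<Omega> i" for b i p
  proof -
    have "(b, i) \<in> V"
      using that(1) unfolding welding_vertices_def by simp
    moreover have "p \<in> D0" "p \<in> cl i"
      using that Omega_subset_D0 Omega_subset_cl by blast+
    ultimately show ?thesis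
      using F_vertex vertex_component_eq[OF that(1)] by simp
  qed
  then show ?thesis
    using F unfolding welding_components_def by (intro exI[of _ F] conjI allI impI)
qed

end
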